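(* There is an absolute constant $c>0$ such that for all integers $n,n_1,n_2,n_3$ with $n=n_1+n_2+n_3$ and $\tilde m_1(n,n_1,n_2,n_3)\neq0$ one has $$|\Phi|\ge \begin{cases} c\,|n_1+n_2|\,|n_2+n_3| & \text{if } |n_2|\ge |n_3|,\\ c\,|n_1+n_3|\,|n_2+n_3| &\text{if } |n_2|<|n_3|,\end{cases}$$ where $\Phi=n|n|-n_1|n_1|-n_2|n_2|-n_3|n_3|$. In particular $\Phi\ne0$ whenever $\tilde m_1\neq 0$.
   Context: Write $n_{ij\ldots}=n_i+n_j+\cdots$ and $\hat n:=n-i\mathbf 1_{\{n=0\}}$. For integers with $n=n_{123}$, $m_1(n,n_1,n_2,n_3):=2i\frac{n\,n_{23}}{\hat n_1\hat n_2}\mathbf 1_{\{n>0\}}\mathbf 1_{\{n_{23}<0\}}\mathbf 1_{\{n_3\neq0\}}$ and $\tilde m_1:=m_1\mathbf 1_{\{n_{12}n_{13}\neq0\}}$. *)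

theory Defs
  imports Complex_Main
begin

definition ind :: "bool \<Rightarrow> complex" where
  "ind b = (if b then 1 else 0)"

definition nhat :: "int \<Rightarrow> complex" where
  "nhat k = of_int k - \<i> * ind (k = 0)"

definition m1 :: "int \<Rightarrow> int \<Rightarrow> int \<Rightarrow> int \<Rightarrow> complex" where
  "m1 n n1 n2 n3 = 2 * \<i> * (of_int n * of_int (n2 + n3)) / (nhat n1 * nhat n2)
      * ind (n > 0) * ind (n2 + n3 < 0) * ind (n3 \<noteq> 0)"

definition m1_tilde :: "int \<Rightarrow> int \<Rightarrow> int \<Rightarrow> int \<Rightarrow> complex" where
  "m1_tilde n n1 n2 n3 = m1 n n1 n2 n3 * ind ((n1 + n2) * (n1 + n3) \<noteq> 0)"

definition Phi :: "int \<Rightarrow> int \<Rightarrow> int \<Rightarrow> int \<Rightarrow> int" where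
  "Phi n n1 n2 n3 = n * \<bar>n\<bar> - n1 * \<bar>n1\<bar> - n2 * \<bar>n2\<bar> - n3 * \<bar>n3\<bar>"

end

theory Submission
  imports Defs
begin

text \<open>Under the conditions forced by \<open>m1_tilde \<noteq> 0\<close> one has \<open>n, n\<^sub>1 > 0 > n\<^sub>2 + n\<^sub>3\<close>,
  and \<open>\<Phi>\<close> is symmetric in \<open>n\<^sub>2, n\<^sub>3\<close>, so we may assume \<open>|n\<^sub>3| \<le> |n\<^sub>2|\<close>; then \<open>n\<^sub>2 < 0\<close>.
  If \<open>n\<^sub>3 \<ge> 0\<close>, expanding the absolute values gives the factorisation
  \<open>\<Phi> = 2(n\<^sub>1 + n\<^sub>2)(n\<^sub>2 + n\<^sub>3)\<close>. If \<open>n\<^sub>3 < 0\<close>, then \<open>\<Phi> = 2(n(n\<^sub>2 + n\<^sub>3) - n\<^sub>2n\<^sub>3)\<close> is a sum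
  of two negative terms, and \<open>n\<^sub>3\<^sup>2 \<le> n\<^sub>2n\<^sub>3\<close> bounds \<open>|n\<^sub>1 + n\<^sub>2||n\<^sub>2 + n\<^sub>3| = (n - n\<^sub>3)|n\<^sub>2 + n\<^sub>3|\<close>
  by \<open>|\<Phi>|\<close>. So the theorem holds with \<open>c = 1\<close>, and \<open>\<Phi> \<noteq> 0\<close> because the lower bound
  is positive.\<close>

lemma ind_eq_0_iff [simp]: "ind b = 0 \<longleftrightarrow> \<not> b"
  by (simp add: ind_def)

lemma m1_tilde_nonzero_imp:
  assumes "m1_tilde n n1 n2 n3 \<noteq> 0"
  shows "n > 0" "n2 + n3 < 0" "n1 + n2 \<noteq> 0" "n1 + n3 \<noteq> 0"
  using assms by (auto simp: m1_tilde_def m1_def)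

lemma Phi_swap: "Phi n n1 n2 n3 = Phi n n1 n3 n2"
  by (simp add: Phi_def)

lemma Phi_lower_bound:
  fixes n n1 n2 n3 :: int
  assumes sum: "n = n1 + n2 + n3" and "n > 0" "n2 + n3 < 0" "\<bar>n3\<bar> \<le> \<bar>n2\<bar>"
  shows "\<bar>n1 + n2\<bar> * \<bar>n2 + n3\<bar> \<le> \<bar>Phi n n1 n2 n3\<bar>"
proof -
  have "n2 < 0" "n1 > 0" using assms by linarith+
  show ?thesis
  proof (cases "n3 \<ge> 0")
    case True
    have "Phi n n1 n2 n3 = n * n - n1 * n1 + n2 * n2 - n3 * n3"
      using True \<open>n > 0\<close> \<open>n1 > 0\<close> \<open>n2 < 0\<close> by (simp add: Phi_def)
    also have "\<dots> = 2 * ((n1 + n2) * (n2 + n3))"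
      unfolding sum by algebra
    finally show ?thesis by (simp only: abs_mult) simp
  next
    case False
    have "Phi n n1 n2 n3 = n * n - n1 * n1 + n2 * n2 + n3 * n3"
      using False \<open>n > 0\<close> \<open>n1 > 0\<close> \<open>n2 < 0\<close> by (simp add: Phi_def)
    also have "\<dots> = 2 * (n * (n2 + n3) - n2 * n3)"
      unfolding sum by algebra
    finally have Phi_eq: "Phi n n1 n2 n3 = 2 * (n * (n2 + n3) - n2 * n3)" .
    have "n3 * n3 \<le> n2 * n3"
      using False \<open>n2 < 0\<close> \<open>\<bar>n3\<bar> \<le> \<bar>n2\<bar>\<close> by (simp add: mult_right_mono_neg)
    moreover have "n * (n2 + n3) < 0"
      using \<open>n > 0\<close> \<open>n2 + n3 < 0\<close> by (simp add: mult_pos_neg)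
    moreover have "\<bar>n1 + n2\<bar> * \<bar>n2 + n3\<bar> = (n - n3) * - (n2 + n3)"
      using sum \<open>n > 0\<close> \<open>n2 + n3 < 0\<close> False by simp
    ultimately show ?thesis
      unfolding Phi_eq by (simp add: algebra_simps)
  qed
qed

theorem mainTheorem4:
  shows "\<exists>c::real. c > 0 \<and>
    (\<forall>n n1 n2 n3 :: int. n = n1 + n2 + n3 \<and> m1_tilde n n1 n2 n3 \<noteq> 0 \<longrightarrow>
       \<bar>real_of_int (Phi n n1 n2 n3)\<bar> \<ge>
         (if \<bar>n2\<bar> \<ge> \<bar>n3\<bar> then c * \<bar>real_of_int (n1 + n2)\<bar> * \<bar>real_of_int (n2 + n3)\<bar>
          else c * \<bar>real_of_int (n1 + n3)\<bar> * \<bar>real_of_int (n2 + n3)\<bar>)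
       \<and> Phi n n1 n2 n3 \<noteq> 0)"
proof (intro exI[of _ 1] conjI allI impI zero_less_one)
  fix n n1 n2 n3 :: int
  assume "n = n1 + n2 + n3 \<and> m1_tilde n n1 n2 n3 \<noteq> 0"
  then have sum: "n = n1 + n2 + n3" and m: "m1_tilde n n1 n2 n3 \<noteq> 0" by blast+
  note cond = m1_tilde_nonzero_imp[OF m]
  define k where "k = (if \<bar>n2\<bar> \<ge> \<bar>n3\<bar> then n1 + n2 else n1 + n3)"
  have bound: "\<bar>k\<bar> * \<bar>n2 + n3\<bar> \<le> \<bar>Phi n n1 n2 n3\<bar>"
  proof (cases "\<bar>n2\<bar> \<ge> \<bar>n3\<bar>")
    case True
    then show ?thesis using Phi_lower_bound[OF sum cond(1,2)] by (simp add: k_def)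
  next
    case False
    have "\<bar>n1 + n3\<bar> * \<bar>n3 + n2\<bar> \<le> \<bar>Phi n n1 n3 n2\<bar>"
      using False sum cond(1,2) by (intro Phi_lower_bound) simp_all
    then show ?thesis
      using False by (simp add: k_def Phi_swap add.commute)
  qed
  moreover have "\<bar>k\<bar> * \<bar>n2 + n3\<bar> > 0"
    using cond by (simp add: k_def)
  ultimately show "Phi n n1 n2 n3 \<noteq> 0" by linarith
  have "real_of_int (\<bar>k\<bar> * \<bar>n2 + n3\<bar>) \<le> real_of_int \<bar>Phi n n1 n2 n3\<bar>"
    using bound by linarith
  then show "\<bar>real_of_int (Phi n n1 n2 n3)\<bar> \<ge>
      (if \<bar>n2\<bar> \<ge> \<bar>n3\<bar> then 1 * \<bar>real_of_int (n1 + n2)\<bar> * \<bar>real_of_int (n2 + n3)\<bar>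
       else 1 * \<bar>real_of_int (n1 + n3)\<bar> * \<bar>real_of_int (n2 + n3)\<bar>)"
    by (cases "\<bar>n2\<bar> \<ge> \<bar>n3\<bar>") (simp_all add: k_def)
qed

end
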